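(* (1) For any $r\ge0$ and odd primes $p_1,\ldots,p_r$ (not necessarily distinct), \[ \sum_{n=0}^{\infty}b_4\!\left(\prod_{s=1}^{r}p_s^2\,n+\frac{\prod_{s=1}^{r}p_s^2-1}{8}\right)q^n \equiv \psi(q) \pmod 2, \] where $\prod_{s=1}^{0}p_s^2=1$. (2) For any $r\ge1$, odd primes $p_1,\ldots,p_r$ and $n\ge0$, \[ b_4\!\left(\prod_{s=1}^{r}p_s^2\, n+\frac{(8i+p_{r})\prod_{s=1}^{r-1}p_s^2\,p_{r}-1}{8}\right)\equiv 0 \pmod 2 \] for each $i=1,2,\ldots,p_r-1$. (3) For any $r\ge1$, odd primes $p_1,\ldots,p_r$ and $n\ge0$, \[ b_4\!\left(\prod_{s=1}^{r-1}p_s^2\,p_{r}\, n+\frac{(8j+1)\prod_{s=1}^{r-1}p_s^2-1}{8}\right)\equiv 0 \pmod 2 \] for every integer $j$ with $0\le j\le p_r-1$ and $\left(\frac{8j+1}{p_r}\right)=-1$.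
   Context: For a positive integer $\ell$, $b_\ell(n)$ denotes the number of partitions of $n$ having no part divisible by $\ell$. $\psi(q)=\sum_{n\ge0}q^{n(n+1)/2}$. A congruence between power series modulo $2$ means coefficientwise congruence. $\left(\frac{a}{p}\right)$ is the Legendre symbol. *)

theory Defs
  imports "HOL-Library.Multiset" "HOL-Number_Theory.Number_Theory"
begin

definition b :: "nat \<Rightarrow> nat \<Rightarrow> nat" where
  "b l n = card {M :: nat multiset. (\<forall>x\<in>#M. 0 < x \<and> \<not> l dvd x) \<and> sum_mset M = n}"

text \<open>Coefficient of q^n in psi(q) = sum_{k>=0} q^(k(k+1)/2).\<close>
definition psi_coeff :: "nat \<Rightarrow> nat" where
  "psi_coeff n = card {k :: nat. k * (k + 1) div 2 = n}"

end

theory Submission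
  imports Defs "HOL-Library.Z2" "HOL-Library.Disjoint_Sets"
    "HOL-Computational_Algebra.Formal_Power_Series" "HOL-Computational_Algebra.Nth_Powers"
begin

unbundle fps_syntax

text \<open>
  Work over \<open>\<bbbF>\<^sub>2\<close> and write \<open>D(K) = \<Prod>k\<in>K. (1 + q^k)\<close>. Moving the largest part
  between a partition with parts in \<open>K\<close> and a set of distinct parts in \<open>K\<close> is a fixed-point-free
  involution, so the partition generating function of \<open>K\<close> is \<open>1 / D(K)\<close>; in particular
  \<open>\<Sum> b\<^sub>4(n) q^n = 1 / D(K\<^sub>4)\<close> with \<open>K\<^sub>4\<close> the positive integers not divisible by 4.
  For \<open>D = D({1, 2, \<dots>})\<close>, splitting off the multiples of 2 resp. 4 and using
  \<open>f(q)^2 = f(q^2)\<close> gives \<open>D = D\<^sub>o\<^sub>d\<^sub>d \<cdot> D^2\<close> and \<open>D = D(K\<^sub>4) \<cdot> D^4\<close>.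
  Counting Maya diagrams by charge and energy in two ways proves Jacobi's triple product identity
  modulo 2. For \<open>a = 2\<close> it yields \<open>D\<^sub>o\<^sub>d\<^sub>d = 1 / D\<close>, and for \<open>a = 4\<close> it yields
  \<open>D\<^sub>o\<^sub>d\<^sub>d = \<theta> \<cdot> D\<^sub>o\<^sub>d\<^sub>d^4\<close> with \<open>\<theta> = \<Sum>c\<in>\<int>. q^(2c^2 + c) = \<psi>(q)\<close>.
  Together, \<open>\<Sum> b\<^sub>4(n) q^n = D^3 = \<theta> = \<psi>(q)\<close> modulo 2.

  The coefficient of \<open>q^n\<close> in \<open>\<psi>\<close> is 1 exactly when \<open>8n + 1\<close> is a square. Along the three
  progressions, \<open>8m + 1\<close> is an odd square times, respectively, \<open>8n + 1\<close>; \<open>p\<close> times a number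
  prime to \<open>p\<close>; and a quadratic non-residue modulo \<open>p\<close>.
\<close>

section \<open>Counting modulo 2\<close>

lemma of_nat_bit: "(of_nat n :: bit) = (if even n then 0 else 1)"
  by (induction n) auto

lemma of_nat_bit_eq_iff_cong: "(of_nat m :: bit) = of_nat n \<longleftrightarrow> [m = n] (mod 2)"
  by (auto simp: of_nat_bit cong_def even_iff_mod_2_eq_zero odd_iff_mod_2_eq_one)

lemma sum_bit_involution:
  fixes g :: "'a \<Rightarrow> bit"
  assumes "finite S" "\<And>x. x \<in> S \<Longrightarrow> \<sigma> x \<in> S" "\<And>x. x \<in> S \<Longrightarrow> \<sigma> (\<sigma> x) = x"
    and "\<And>x. x \<in> S \<Longrightarrow> g (\<sigma> x) = g x"
  shows "sum g S = sum g {x\<in>S. \<sigma> x = x}"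
proof -
  let ?F = "{x\<in>S. \<sigma> x = x}"
  have "sum g S = sum g (S - ?F) + sum g ?F"
    by (rule sum.subset_diff) (use assms(1) in auto)
  also have "sum g (S - ?F) = 0"
  proof (rule sum_involution_eq_0[where h = \<sigma>])
    fix x assume x: "x \<in> S - ?F"
    then show "g (\<sigma> x) + g x = 0" using assms(4) by simp
    show "\<sigma> x \<in> S - ?F" using x assms(2,3) by force
    show "\<sigma> (\<sigma> x) = x" "\<sigma> x \<noteq> x" using x assms(3) by auto
  qed
  finally show ?thesis by (simp only: add_0_left)
qed

lemma card_bit_involution:
  assumes "finite S" "\<And>x. x \<in> S \<Longrightarrow> \<sigma> x \<in> S" "\<And>x. x \<in> S \<Longrightarrow> \<sigma> (\<sigma> x) = x"
  shows "(of_nat (card S) :: bit) = of_nat (card {x\<in>S. \<sigma> x = x})"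
proof -
  have "(\<Sum>_\<in>S. 1 :: bit) = (\<Sum>_\<in>{x\<in>S. \<sigma> x = x}. 1)"
    by (rule sum_bit_involution) (use assms in auto)
  then show ?thesis by (simp only: sum_constant mult_1_right)
qed

lemma card_pairs_with_sum:
  fixes f :: "'a \<Rightarrow> nat" and g :: "'b \<Rightarrow> nat"
  assumes "\<And>i. finite {x\<in>X. f x = i}" "\<And>i. finite {y\<in>Y. g y = i}"
  shows "card {(x, y). x \<in> X \<and> y \<in> Y \<and> f x + g y = n}
         = (\<Sum>i=0..n. card {x\<in>X. f x = i} * card {y\<in>Y. g y = n - i})"
proof -
  have "{(x, y). x \<in> X \<and> y \<in> Y \<and> f x + g y = n}
      = (\<Union>i\<in>{0..n}. {x\<in>X. f x = i} \<times> {y\<in>Y. g y = n - i})"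
    by auto
  moreover have "card (\<Union>i\<in>{0..n}. {x\<in>X. f x = i} \<times> {y\<in>Y. g y = n - i})
      = (\<Sum>i=0..n. card ({x\<in>X. f x = i} \<times> {y\<in>Y. g y = n - i}))"
    by (rule card_UN_disjoint) (use assms in auto)
  ultimately show ?thesis by (simp add: card_cartesian_product)
qed

section \<open>Partitions into distinct parts\<close>

definition distinct_parts :: "nat set \<Rightarrow> nat \<Rightarrow> nat set set" where
  "distinct_parts K n = {S. S \<subseteq> K \<and> finite S \<and> \<Sum>S = n}"

lemma distinct_parts_subset_Pow: "distinct_parts K n \<subseteq> Pow {..n}"
  by (auto simp: distinct_parts_def intro: member_le_sum[of _ _ "\<lambda>x. x", simplified])

lemma finite_distinct_parts [simp]: "finite (distinct_parts K n)"
  by (rule finite_subset[OF distinct_parts_subset_Pow]) auto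

lemma distinct_parts_0: "0 \<notin> K \<Longrightarrow> distinct_parts K 0 = {{}}"
  using distinct_parts_subset_Pow[of K 0] by (auto simp: distinct_parts_def)

definition distinct_parts_fps :: "nat set \<Rightarrow> bit fps" where
  "distinct_parts_fps K = Abs_fps (\<lambda>n. of_nat (card (distinct_parts K n)))"

lemma distinct_parts_fps_nth_0: "0 \<notin> K \<Longrightarrow> distinct_parts_fps K $ 0 = 1"
  by (simp add: distinct_parts_fps_def distinct_parts_0)

definition distinct_part_pairs :: "nat set \<Rightarrow> nat set \<Rightarrow> nat \<Rightarrow> (nat set \<times> nat set) set" where
  "distinct_part_pairs K L n = {(X, Y). X \<subseteq> K \<and> finite X \<and> Y \<subseteq> L \<and> finite Y \<and> \<Sum>X + \<Sum>Y = n}"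

lemma distinct_parts_fps_mult_nth:
  "(distinct_parts_fps K * distinct_parts_fps L) $ n = of_nat (card (distinct_part_pairs K L n))"
proof -
  have "distinct_part_pairs K L n = {(X, Y). X \<in> {S. S \<subseteq> K \<and> finite S} \<and> Y \<in> {S. S \<subseteq> L \<and> finite S}
        \<and> \<Sum>X + \<Sum>Y = n}"
    by (auto simp: distinct_part_pairs_def)
  also have "card \<dots> = (\<Sum>i=0..n. card (distinct_parts K i) * card (distinct_parts L (n - i)))"
    by (subst card_pairs_with_sum)
       (auto simp: distinct_parts_def conj_commute conj_left_commute
        intro: finite_subset[OF _ finite_distinct_parts])
  finally show ?thesis
    by (simp add: distinct_parts_fps_def fps_mult_nth)
qed

lemma distinct_parts_fps_union:
  assumes "K \<inter> L = {}"
  shows "distinct_parts_fps (K \<union> L) = distinct_parts_fps K * distinct_parts_fps L"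
proof (rule fps_ext)
  fix n
  have "bij_betw (\<lambda>S. (S \<inter> K, S \<inter> L)) (distinct_parts (K \<union> L) n) (distinct_part_pairs K L n)"
  proof (rule bij_betw_byWitness[where f' = "\<lambda>(X, Y). X \<union> Y"])
    show "(\<lambda>S. (S \<inter> K, S \<inter> L)) ` distinct_parts (K \<union> L) n \<subseteq> distinct_part_pairs K L n"
    proof clarify
      fix S assume S: "S \<in> distinct_parts (K \<union> L) n"
      then have "S = (S \<inter> K) \<union> (S \<inter> L)" "finite S" by (auto simp: distinct_parts_def)
      then have "\<Sum>S = \<Sum>(S \<inter> K) + \<Sum>(S \<inter> L)"
        using assms by (metis finite_Int inf_assoc inf_bot_right inf_commute sum.union_disjoint)
      with S show "(S \<inter> K, S \<inter> L) \<in> distinct_part_pairs K L n"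
        by (auto simp: distinct_parts_def distinct_part_pairs_def)
    qed
    show "(\<lambda>(X, Y). X \<union> Y) ` distinct_part_pairs K L n \<subseteq> distinct_parts (K \<union> L) n"
    proof clarify
      fix X Y assume XY: "(X, Y) \<in> distinct_part_pairs K L n"
      moreover from this have "X \<inter> Y = {}" using assms by (auto simp: distinct_part_pairs_def)
      ultimately show "X \<union> Y \<in> distinct_parts (K \<union> L) n"
        by (auto simp: distinct_parts_def distinct_part_pairs_def sum.union_disjoint)
    qed
  qed (use assms in \<open>auto simp: distinct_parts_def distinct_part_pairs_def\<close>)
  then have "card (distinct_parts (K \<union> L) n) = card (distinct_part_pairs K L n)"
    by (rule bij_betw_same_card)
  then show "distinct_parts_fps (K \<union> L) $ n = (distinct_parts_fps K * distinct_parts_fps L) $ n"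
    unfolding distinct_parts_fps_mult_nth by (simp add: distinct_parts_fps_def)
qed

definition fps_stretch :: "nat \<Rightarrow> 'a::zero fps \<Rightarrow> 'a fps" where
  "fps_stretch k f = Abs_fps (\<lambda>n. if k dvd n then f $ (n div k) else 0)"

lemma fps_stretch_nth_mult [simp]: "0 < k \<Longrightarrow> fps_stretch k f $ (k * n) = f $ n"
  by (simp add: fps_stretch_def)

lemma fps_stretch_inject: "0 < k \<Longrightarrow> fps_stretch k f = fps_stretch k g \<Longrightarrow> f = g"
  by (metis fps_ext fps_stretch_nth_mult)

lemma fps_stretch_stretch:
  assumes "0 < k"
  shows "fps_stretch k (fps_stretch l f) = fps_stretch (k * l) f"
proof (rule fps_ext)
  fix n
  show "fps_stretch k (fps_stretch l f) $ n = fps_stretch (k * l) f $ n"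
  proof (cases "k dvd n")
    case True
    then obtain m where "n = k * m" ..
    with assms show ?thesis by (simp add: fps_stretch_def div_mult2_eq)
  next
    case False
    then have "\<not> k * l dvd n" using dvd_mult_left by blast
    with False show ?thesis by (simp add: fps_stretch_def)
  qed
qed

lemma card_distinct_parts_image_mult:
  assumes "0 < k"
  shows "card (distinct_parts ((*) k ` K) n) = (if k dvd n then card (distinct_parts K (n div k)) else 0)"
proof (cases "k dvd n")
  case False
  have "k dvd \<Sum>S" if "S \<subseteq> (*) k ` K" for S
    using that by (intro dvd_sum) auto
  with False have "distinct_parts ((*) k ` K) n = {}"
    by (auto simp: distinct_parts_def)
  with False show ?thesis by simp
next
  case True
  have inj: "inj ((*) k)" using assms by (auto simp: inj_on_def)
  have sum_image: "\<Sum>((*) k ` S) = k * \<Sum>S" for S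
    using inj by (simp add: sum.reindex inj_on_def sum_distrib_left)
  have "distinct_parts ((*) k ` K) n = (`) ((*) k) ` distinct_parts K (n div k)"
  proof (intro equalityI subsetI)
    fix S assume S: "S \<in> distinct_parts ((*) k ` K) n"
    then obtain T where T: "T \<subseteq> K" "S = (*) k ` T"
      by (auto simp: distinct_parts_def subset_image_iff)
    with S have "finite T" "k * \<Sum>T = n"
      by (auto simp: distinct_parts_def sum_image finite_image_iff[OF inj_on_subset[OF inj]])
    with T assms show "S \<in> (`) ((*) k) ` distinct_parts K (n div k)"
      by (auto simp: distinct_parts_def)
  qed (use True in \<open>auto simp: distinct_parts_def sum_image\<close>)
  moreover have "inj_on ((`) ((*) k)) (distinct_parts K (n div k))"
    using inj by (simp add: inj_on_def inj_image_eq_iff)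
  ultimately show ?thesis
    using True by (simp add: card_image)
qed

lemma distinct_parts_fps_image_mult:
  "0 < k \<Longrightarrow> distinct_parts_fps ((*) k ` K) = fps_stretch k (distinct_parts_fps K)"
  by (rule fps_ext) (simp add: distinct_parts_fps_def fps_stretch_def card_distinct_parts_image_mult)

lemma bit_mult_self [simp]: "(x :: bit) * x = x"
  by (cases x) auto

text \<open>The cross terms of a square cancel in characteristic 2.\<close>
lemma bit_fps_power2: "(f :: bit fps) ^ 2 = fps_stretch 2 f"
proof (rule fps_ext)
  fix n
  have "(f ^ 2) $ n = (\<Sum>i\<in>{0..n}. f $ i * f $ (n - i))"
    by (simp add: power2_eq_square fps_mult_nth)
  also have "\<dots> = (\<Sum>i\<in>{i\<in>{0..n}. n - i = i}. f $ i * f $ (n - i))"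
    by (rule sum_bit_involution) (auto simp: mult.commute)
  also have "\<dots> = fps_stretch 2 f $ n"
  proof (cases "even n")
    case True
    then have "{i\<in>{0..n}. n - i = i} = {n div 2}" "n - n div 2 = n div 2" by auto
    with True show ?thesis
      by (simp only: fps_stretch_def fps_nth_Abs_fps if_True sum.insert[OF finite.emptyI]
          empty_iff not_False_eq_True sum.empty add_0_right bit_mult_self)
  next
    case False
    then have "n - i \<noteq> i" if "i \<le> n" for i using that by presburger
    then have "{i\<in>{0..n}. n - i = i} = {}" by auto
    with False show ?thesis unfolding \<open>{i\<in>{0..n}. n - i = i} = {}\<close> sum.empty
      by (simp add: fps_stretch_def)
  qed
  finally show "(f ^ 2) $ n = fps_stretch 2 f $ n" .
qed

lemma bit_fps_power4: "(f :: bit fps) ^ 4 = fps_stretch 4 f"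
proof -
  have "f ^ 4 = (f ^ 2) ^ 2" by (simp flip: power_mult)
  then show ?thesis by (simp add: bit_fps_power2 fps_stretch_stretch)
qed

section \<open>Maya diagrams\<close>

text \<open>A Maya diagram is encoded by \<open>(A, B)\<close>: \<open>A\<close> holds the occupied levels \<open>i \<ge> 1\<close> and \<open>B\<close> the
  empty levels \<open>-j \<le> 0\<close> (as \<open>j\<close>). \<open>maya_shift\<close> moves every bead one level up.\<close>
definition maya_diagrams :: "(nat set \<times> nat set) set" where
  "maya_diagrams = {(A, B). finite A \<and> finite B \<and> 0 \<notin> A}"

definition maya_energy :: "nat set \<times> nat set \<Rightarrow> nat" where
  "maya_energy p = \<Sum>(fst p) + \<Sum>(snd p)"

definition maya_charge :: "nat set \<times> nat set \<Rightarrow> int" where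
  "maya_charge p = int (card (fst p)) - int (card (snd p))"

definition maya_shift :: "nat set \<times> nat set \<Rightarrow> nat set \<times> nat set" where
  "maya_shift p = (Suc ` fst p \<union> (if 0 \<in> snd p then {} else {1}), (\<lambda>x. x - 1) ` (snd p - {0}))"

definition maya_unshift :: "nat set \<times> nat set \<Rightarrow> nat set \<times> nat set" where
  "maya_unshift p = ((\<lambda>x. x - 1) ` (fst p - {1}), Suc ` snd p \<union> (if 1 \<in> fst p then {} else {0}))"

lemma maya_shift_in: "p \<in> maya_diagrams \<Longrightarrow> maya_shift p \<in> maya_diagrams"
  by (auto simp: maya_diagrams_def maya_shift_def)

lemma maya_unshift_in: "p \<in> maya_diagrams \<Longrightarrow> maya_unshift p \<in> maya_diagrams"
  by (auto simp: maya_diagrams_def maya_unshift_def) (metis le_Suc_eq le_zero_eq)+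

lemma Suc_pred_image: "0 \<notin> B \<Longrightarrow> Suc ` (\<lambda>x. x - 1) ` B = B"
proof -
  assume "0 \<notin> B"
  then have "Suc ` (\<lambda>x. x - 1) ` B = (\<lambda>x. x) ` B"
    unfolding image_image by (intro image_cong refl) (metis One_nat_def Suc_pred gr0I)
  then show ?thesis by simp
qed

lemma maya_unshift_shift: "p \<in> maya_diagrams \<Longrightarrow> maya_unshift (maya_shift p) = p"
proof -
  assume "p \<in> maya_diagrams"
  then obtain A B where p: "p = (A, B)" and "0 \<notin> A" by (auto simp: maya_diagrams_def)
  then have "1 \<notin> Suc ` A" by auto
  then have "(Suc ` A \<union> (if 0 \<in> B then {} else {1})) - {1} = Suc ` A"
    "1 \<in> Suc ` A \<union> (if 0 \<in> B then {} else {1}) \<longleftrightarrow> 0 \<notin> B"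
    by auto
  moreover have "Suc ` (\<lambda>x. x - 1) ` (B - {0}) = B - {0}" by (rule Suc_pred_image) auto
  ultimately show ?thesis
    by (auto simp: p maya_shift_def maya_unshift_def image_image)
qed

lemma maya_shift_unshift: "p \<in> maya_diagrams \<Longrightarrow> maya_shift (maya_unshift p) = p"
proof -
  assume "p \<in> maya_diagrams"
  then obtain A B where p: "p = (A, B)" and "0 \<notin> A" by (auto simp: maya_diagrams_def)
  have "0 \<notin> Suc ` B" by auto
  then have "(Suc ` B \<union> (if 1 \<in> A then {} else {0})) - {0} = Suc ` B"
    "0 \<in> Suc ` B \<union> (if 1 \<in> A then {} else {0}) \<longleftrightarrow> 1 \<notin> A"
    by auto
  moreover have "Suc ` (\<lambda>x. x - 1) ` (A - {1}) = A - {1}" using \<open>0 \<notin> A\<close> by (intro Suc_pred_image) auto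
  ultimately show ?thesis
    by (auto simp: p maya_shift_def maya_unshift_def image_image)
qed

lemma sum_Suc_image: "finite A \<Longrightarrow> \<Sum>(Suc ` A) = \<Sum>A + card A"
  by (simp add: sum.reindex) (induction A rule: finite_induct, auto)

lemma sum_pred_image:
  assumes "finite B" "0 \<notin> B"
  shows "\<Sum>((\<lambda>x. x - 1) ` B) + card B = \<Sum>B"
proof -
  have "inj_on (\<lambda>x. x - 1) B"
    using assms(2) by (intro inj_onI) (metis One_nat_def Suc_pred gr0I)
  then have "\<Sum>((\<lambda>x. x - 1) ` B) + card B = (\<Sum>x\<in>B. x - 1) + (\<Sum>x\<in>B. 1)"
    by (simp add: sum.reindex)
  also have "\<dots> = (\<Sum>x\<in>B. x - 1 + 1)"
    by (simp only: sum.distrib)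
  also have "\<dots> = \<Sum>B"
  proof (rule sum.cong)
    fix x assume "x \<in> B"
    with assms(2) show "x - 1 + 1 = x" by (cases x) auto
  qed simp
  finally show ?thesis .
qed

lemma card_Diff_singleton_add:
  "finite A \<Longrightarrow> card (A - {x}) + (if x \<in> A then 1 else 0) = card A"
  by (auto simp: card_Diff_singleton_if) (metis One_nat_def Suc_pred card_gt_0_iff empty_iff)

lemma maya_charge_energy_shift:
  assumes "p \<in> maya_diagrams"
  shows "maya_charge (maya_shift p) = maya_charge p + 1"
    and "int (maya_energy (maya_shift p)) = int (maya_energy p) + maya_charge p + 1"
proof -
  obtain A B where p: "p = (A, B)" and fin: "finite A" "finite B" and "0 \<notin> A"
    using assms by (auto simp: maya_diagrams_def)
  then have "1 \<notin> Suc ` A" by auto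
  with fin have card_A:
    "card (Suc ` A \<union> (if 0 \<in> B then {} else {1})) = card A + (if 0 \<in> B then 0 else 1)"
    and sum_A:
    "\<Sum>(Suc ` A \<union> (if 0 \<in> B then {} else {1})) = \<Sum>A + card A + (if 0 \<in> B then 0 else 1)"
    by (auto simp: card_image sum_Suc_image)
  have "inj_on (\<lambda>x. x - 1) (B - {0})" by (auto simp: inj_on_def)
  then have new_snd: "card ((\<lambda>x. x - 1) ` (B - {0})) = card (B - {0})"
    by (rule card_image)
  have card_B: "card (B - {0}) + (if 0 \<in> B then 1 else 0) = card B"
    using fin(2) by (rule card_Diff_singleton_add)
  have sum_B: "\<Sum>((\<lambda>x. x - 1) ` (B - {0})) + card (B - {0}) = \<Sum>B"
    using sum_pred_image[of "B - {0}"] fin(2) by (simp add: sum_diff1_nat)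
  show "maya_charge (maya_shift p) = maya_charge p + 1"
    using card_A new_snd card_B unfolding maya_charge_def maya_shift_def p
    by (auto split: if_splits)
  have "maya_energy (maya_shift p) + card B = maya_energy p + card A + 1"
    using sum_A new_snd card_B sum_B unfolding maya_energy_def maya_shift_def p
    by (auto split: if_splits)
  then show "int (maya_energy (maya_shift p)) = int (maya_energy p) + maya_charge p + 1"
    by (simp add: maya_charge_def p)
qed

definition maya_count :: "int \<Rightarrow> int \<Rightarrow> nat" where
  "maya_count c e = card {p \<in> maya_diagrams. maya_charge p = c \<and> int (maya_energy p) = e}"

lemma maya_count_succ_charge: "maya_count (c + 1) e = maya_count c (e - c - 1)"
proof -
  let ?S = "\<lambda>c e. {p \<in> maya_diagrams. maya_charge p = c \<and> int (maya_energy p) = e}"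
  have image: "maya_shift ` ?S c (e - c - 1) = ?S (c + 1) e"
  proof (intro equalityI subsetI)
    fix q assume "q \<in> maya_shift ` ?S c (e - c - 1)"
    then obtain r where r: "r \<in> ?S c (e - c - 1)" "q = maya_shift r" by blast
    then show "q \<in> ?S (c + 1) e"
      using maya_shift_in[of r] maya_charge_energy_shift[of r] by auto
  next
    fix q assume q: "q \<in> ?S (c + 1) e"
    define r where "r = maya_unshift q"
    have r: "r \<in> maya_diagrams" "maya_shift r = q"
      using q by (auto simp: r_def maya_unshift_in maya_shift_unshift)
    have "r \<in> ?S c (e - c - 1)"
      using q r(1) maya_charge_energy_shift[OF r(1)] unfolding r(2) by auto
    with r(2) show "q \<in> maya_shift ` ?S c (e - c - 1)" by blast
  qed
  have "inj_on maya_shift (?S c (e - c - 1))"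
    by (rule inj_on_inverseI[where g = maya_unshift]) (simp add: maya_unshift_shift)
  then have "card (maya_shift ` ?S c (e - c - 1)) = card (?S c (e - c - 1))"
    by (rule card_image)
  then show ?thesis
    unfolding maya_count_def image .
qed

definition triangular :: "int \<Rightarrow> int" where
  "triangular c = c * (c + 1) div 2"

lemma two_times_triangular: "2 * triangular c = c * (c + 1)"
proof -
  have "even (c * (c + 1))" by simp
  then show ?thesis unfolding triangular_def by simp
qed

lemma triangular_succ: "triangular (c + 1) = triangular c + c + 1"
proof -
  have "2 * triangular (c + 1) = 2 * (triangular c + c + 1)"
    unfolding distrib_left two_times_triangular by (simp add: algebra_simps)
  then show ?thesis by simp
qed

lemma triangular_nonneg: "0 \<le> triangular c"
proof -
  have "0 \<le> c * (c + 1)"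
    by (cases "c \<ge> 0") (simp_all add: zero_le_mult_iff)
  then show ?thesis using two_times_triangular[of c] by simp
qed

lemma maya_count_eq_charge_zero: "maya_count c e = maya_count 0 (e - triangular c)"
proof (induction c arbitrary: e rule: int_induct[where k = 0])
  case base
  then show ?case by (simp add: triangular_def)
next
  case (step1 c)
  have "maya_count (c + 1) e = maya_count c (e - c - 1)"
    by (rule maya_count_succ_charge)
  also have "\<dots> = maya_count 0 (e - triangular (c + 1))"
    using step1 triangular_succ[of c] by (simp add: algebra_simps)
  finally show ?case .
next
  case (step2 c)
  have "maya_count (c - 1) e = maya_count c (e + c)"
    using maya_count_succ_charge[of "c - 1" "e + c"] by simp
  also have "\<dots> = maya_count 0 (e - triangular (c - 1))"
    using step2 triangular_succ[of "c - 1"] by (simp add: algebra_simps)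
  finally show ?case .
qed

section \<open>Jacobi's triple product modulo 2\<close>

definition maya_weight :: "nat \<Rightarrow> nat set \<times> nat set \<Rightarrow> int" where
  "maya_weight a p = int a * int (maya_energy p) - maya_charge p"

definition minus_one_residues :: "nat \<Rightarrow> nat set" where
  "minus_one_residues a = (\<lambda>x. a * x - 1) ` {0<..}"

definition one_residues :: "nat \<Rightarrow> nat set" where
  "one_residues a = (\<lambda>x. a * x + 1) ` UNIV"

lemma subset_greaterThan_0: "0 \<notin> A \<Longrightarrow> A \<subseteq> {0::nat<..}"
  by (intro subsetI) (metis greaterThan_iff gr0I)

lemma inj_on_mult_minus_one:
  fixes a :: nat
  assumes "0 < a"
  shows "inj_on (\<lambda>x. a * x - 1) {0<..}"
proof (rule inj_onI)
  fix x y :: nat assume "x \<in> {0<..}" "y \<in> {0<..}" "a * x - 1 = a * y - 1"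
  moreover from this have "1 \<le> a * x" "1 \<le> a * y" using assms by (simp_all add: Suc_le_eq)
  ultimately have "a * x = a * y" by linarith
  with assms show "x = y" by simp
qed

lemma int_sum_image_mult_minus_one:
  assumes "finite A" "0 \<notin> A" "0 < a"
  shows "int (\<Sum>((\<lambda>x. a * x - 1) ` A)) = int a * int (\<Sum>A) - int (card A)"
proof -
  have "A \<subseteq> {0<..}" using assms(2) by (rule subset_greaterThan_0)
  then have "inj_on (\<lambda>x. a * x - 1) A"
    using inj_on_mult_minus_one[OF assms(3)] by (rule inj_on_subset[rotated])
  then have "int (\<Sum>((\<lambda>x. a * x - 1) ` A)) = (\<Sum>x\<in>A. int (a * x - 1))"
    by (simp add: sum.reindex)
  also have "\<dots> = (\<Sum>x\<in>A. int a * int x - 1)"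
    using \<open>A \<subseteq> {0<..}\<close> assms(3) by (intro sum.cong refl) (auto simp: of_nat_diff Suc_leI)
  also have "\<dots> = int a * int (\<Sum>A) - int (card A)"
    by (simp add: sum_subtractf sum_distrib_left)
  finally show ?thesis .
qed

lemma int_sum_image_mult_plus_one:
  assumes "0 < a"
  shows "int (\<Sum>((\<lambda>x. a * x + 1) ` B)) = int a * int (\<Sum>B) + int (card B)"
proof -
  have "inj (\<lambda>x. a * x + 1)" using assms by (auto simp: inj_on_def)
  then show ?thesis
    by (simp add: sum.reindex sum.distrib sum_distrib_left inj_on_subset)
qed

text \<open>Placing the particles of a Maya diagram at the levels \<open>a x - 1\<close> and its holes at
  \<open>a y + 1\<close> turns weighted Maya diagrams into pairs of partitions into distinct parts.\<close>
definition maya_parts :: "nat \<Rightarrow> nat set \<times> nat set \<Rightarrow> nat set \<times> nat set" where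
  "maya_parts a p = ((\<lambda>x. a * x - 1) ` fst p, (\<lambda>x. a * x + 1) ` snd p)"

lemma maya_weight_eq_sum_maya_parts:
  assumes "0 < a" "p \<in> maya_diagrams"
  shows "maya_weight a p = int (\<Sum>(fst (maya_parts a p)) + \<Sum>(snd (maya_parts a p)))"
proof -
  obtain A B where p: "p = (A, B)" "finite A" "0 \<notin> A"
    using assms(2) by (auto simp: maya_diagrams_def)
  with assms(1) show ?thesis
    using int_sum_image_mult_minus_one[of A a] int_sum_image_mult_plus_one[of a B]
    unfolding p(1) maya_weight_def maya_energy_def maya_charge_def maya_parts_def of_nat_add
      distrib_left fst_conv snd_conv
    by linarith
qed

lemma inj_on_maya_parts:
  assumes "0 < a"
  shows "inj_on (maya_parts a) maya_diagrams"
proof (rule inj_onI)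
  fix p p' assume "p \<in> maya_diagrams" "p' \<in> maya_diagrams" and eq: "maya_parts a p = maya_parts a p'"
  then obtain A B A' B' where AB: "p = (A, B)" "p' = (A', B')" "0 \<notin> A" "0 \<notin> A'"
    by (auto simp: maya_diagrams_def)
  from eq have img: "(\<lambda>x. a * x - 1) ` A = (\<lambda>x. a * x - 1) ` A'" "(\<lambda>x. a * x + 1) ` B = (\<lambda>x. a * x + 1) ` B'"
    by (simp_all add: maya_parts_def AB)
  have "A \<subseteq> {0<..}" "A' \<subseteq> {0<..}" using AB(3,4) by (simp_all add: subset_greaterThan_0)
  with img(1) inj_on_image_eq_iff[OF inj_on_mult_minus_one[OF assms]] have "A = A'" by blast
  moreover have "inj (\<lambda>x. a * x + 1)" using assms by (auto simp: inj_on_def)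
  with img(2) have "B = B'" by (simp add: inj_image_eq_iff)
  ultimately show "p = p'" by (simp add: AB)
qed

lemma maya_parts_image:
  assumes "0 < a"
  shows "maya_parts a ` {p \<in> maya_diagrams. maya_weight a p = int n}
       = distinct_part_pairs (minus_one_residues a) (one_residues a) n"
proof (intro equalityI subsetI)
  fix q assume "q \<in> maya_parts a ` {p \<in> maya_diagrams. maya_weight a p = int n}"
  then obtain A B where AB: "(A, B) \<in> maya_diagrams" "maya_weight a (A, B) = int n"
    and q: "q = maya_parts a (A, B)" by auto
  from AB have "\<Sum>(fst q) + \<Sum>(snd q) = n"
    unfolding q maya_weight_eq_sum_maya_parts[OF assms AB(1)] by (simp only: of_nat_eq_iff)
  moreover from AB(1) have "A \<subseteq> {0<..}" "finite A" "finite B"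
    by (simp_all add: maya_diagrams_def subset_greaterThan_0)
  ultimately show "q \<in> distinct_part_pairs (minus_one_residues a) (one_residues a) n"
    unfolding q distinct_part_pairs_def minus_one_residues_def one_residues_def maya_parts_def
    by auto
next
  let ?f = "\<lambda>x. a * x - 1" and ?g = "\<lambda>x. a * x + 1"
  fix q assume q: "q \<in> distinct_part_pairs (minus_one_residues a) (one_residues a) n"
  then obtain X Y where XY: "q = (X, Y)" "X \<subseteq> ?f ` {0<..}" "Y \<subseteq> range ?g"
    "finite X" "finite Y" "\<Sum>X + \<Sum>Y = n"
    by (auto simp: distinct_part_pairs_def minus_one_residues_def one_residues_def)
  from XY(2) obtain A where A: "A \<subseteq> {0<..}" "X = ?f ` A"
    by (meson subset_image_iff)
  from XY(3) obtain B where B: "Y = ?g ` B"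
    by (meson subset_image_iff)
  have "inj (\<lambda>x. a * x + 1)" using assms by (auto simp: inj_on_def)
  with XY(4,5) A B inj_on_mult_minus_one[OF assms] have "finite A" "finite B"
    by (metis finite_imageD inj_on_subset subset_UNIV)+
  with A(1) have AB: "(A, B) \<in> maya_diagrams"
    by (auto simp: maya_diagrams_def)
  moreover have "q = maya_parts a (A, B)"
    by (simp add: maya_parts_def XY(1) A(2) B)
  moreover from AB XY(6) have "maya_weight a (A, B) = int n"
    unfolding maya_weight_eq_sum_maya_parts[OF assms AB] by (simp add: maya_parts_def A(2) B)
  ultimately show "q \<in> maya_parts a ` {p \<in> maya_diagrams. maya_weight a p = int n}"
    by blast
qed

lemma card_maya_weight_eq_distinct_part_pairs:
  assumes "0 < a"
  shows "card {p \<in> maya_diagrams. maya_weight a p = int n}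
       = card (distinct_part_pairs (minus_one_residues a) (one_residues a) n)"
proof -
  have "inj_on (maya_parts a) {p \<in> maya_diagrams. maya_weight a p = int n}"
    using inj_on_maya_parts[OF assms] by (rule inj_on_subset) auto
  then show ?thesis
    by (simp flip: maya_parts_image[OF assms] add: card_image)
qed

lemma card_le_sum_nat:
  assumes "0 \<notin> A"
  shows "card A \<le> \<Sum>(A :: nat set)"
proof -
  have "(\<Sum>_\<in>A. 1) \<le> (\<Sum>x\<in>A. x)"
    using assms by (intro sum_mono) (metis One_nat_def Suc_leI gr0I)
  then show ?thesis by simp
qed

lemma subset_atMost_sum: "finite A \<Longrightarrow> \<Sum>A \<le> n \<Longrightarrow> A \<subseteq> {..(n :: nat)}"
  using member_le_sum[of _ A "\<lambda>x. x"] by fastforce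

lemma maya_charge_bounds:
  assumes "p \<in> maya_diagrams"
  shows "maya_charge p \<le> int (maya_energy p)" "- maya_charge p \<le> int (maya_energy p) + 1"
proof -
  obtain A B where p: "p = (A, B)" "finite A" "finite B" "0 \<notin> A"
    using assms by (auto simp: maya_diagrams_def)
  have "card A \<le> \<Sum>A" using p(4) by (rule card_le_sum_nat)
  have "card B \<le> card (B - {0}) + 1"
    using card_Diff_singleton_add[OF p(3), of 0] by (auto split: if_splits)
  moreover have "card (B - {0}) \<le> \<Sum>(B - {0})" by (rule card_le_sum_nat) simp
  moreover have "\<Sum>(B - {0}) = \<Sum>B" using p(3) by (simp add: sum_diff1_nat)
  ultimately have "card B \<le> \<Sum>B + 1" by linarith
  with \<open>card A \<le> \<Sum>A\<close> show "maya_charge p \<le> int (maya_energy p)" "- maya_charge p \<le> int (maya_energy p) + 1"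
    unfolding maya_charge_def maya_energy_def p fst_conv snd_conv by linarith+
qed

lemma finite_maya_energy_le: "finite {p \<in> maya_diagrams. maya_energy p \<le> n}"
proof (rule finite_subset)
  show "{p \<in> maya_diagrams. maya_energy p \<le> n} \<subseteq> Pow {..n} \<times> Pow {..n}"
  proof
    fix p assume "p \<in> {p \<in> maya_diagrams. maya_energy p \<le> n}"
    then obtain A B where p: "p = (A, B)" "finite A" "finite B" "\<Sum>A + \<Sum>B \<le> n"
      by (auto simp: maya_diagrams_def maya_energy_def)
    have "A \<subseteq> {..n}" using p(2) by (rule subset_atMost_sum) (use p(4) in linarith)
    moreover have "B \<subseteq> {..n}" using p(3) by (rule subset_atMost_sum) (use p(4) in linarith)
    ultimately show "p \<in> Pow {..n} \<times> Pow {..n}" by (simp add: p)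
  qed
qed auto

lemma card_maya_charge_energy_mult:
  assumes "0 < a"
  shows "card {p \<in> maya_diagrams. maya_charge p = c \<and> int a * int (maya_energy p) = m}
       = (if int a dvd m then maya_count c (m div int a) else 0)"
proof (cases "int a dvd m")
  case True
  then obtain k where m: "m = int a * k" ..
  with assms show ?thesis by (simp add: maya_count_def)
next
  case False
  have "int a dvd m" if "int a * int (maya_energy p) = m" for p
    using that dvd_triv_left by metis
  with False have empty: "{p \<in> maya_diagrams. maya_charge p = c \<and> int a * int (maya_energy p) = m} = {}"
    by blast
  show ?thesis unfolding empty using False by simp
qed

definition theta_exponent :: "nat \<Rightarrow> int \<Rightarrow> int" where
  "theta_exponent a c = int a * triangular c - c"

lemma card_maya_weight_charge:
  assumes "0 < a"
  shows "card {p \<in> maya_diagrams. maya_charge p = c \<and> maya_weight a p = int n}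
       = card {q \<in> maya_diagrams. maya_charge q = 0 \<and>
                 theta_exponent a c + int a * int (maya_energy q) = int n}"
proof -
  let ?m = "int n + c"
  have "{p \<in> maya_diagrams. maya_charge p = c \<and> maya_weight a p = int n}
      = {p \<in> maya_diagrams. maya_charge p = c \<and> int a * int (maya_energy p) = ?m}"
    by (auto simp: maya_weight_def)
  then have lhs: "card {p \<in> maya_diagrams. maya_charge p = c \<and> maya_weight a p = int n}
      = (if int a dvd ?m then maya_count 0 (?m div int a - triangular c) else 0)"
    using assms by (simp add: card_maya_charge_energy_mult maya_count_eq_charge_zero[of c])
  have rhs_set: "{q \<in> maya_diagrams. maya_charge q = 0 \<and>
                 theta_exponent a c + int a * int (maya_energy q) = int n}
      = {q \<in> maya_diagrams. maya_charge q = 0 \<and>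
                 int a * int (maya_energy q) = ?m + (- triangular c) * int a}"
  proof -
    have "(- triangular c) * int a = - (int a * triangular c)" by simp
    then have "theta_exponent a c + x = int n \<longleftrightarrow> x = ?m + (- triangular c) * int a" for x
      unfolding theta_exponent_def by (intro iffI) linarith+
    then show ?thesis by simp
  qed
  have rhs: "card {q \<in> maya_diagrams. maya_charge q = 0 \<and>
                 theta_exponent a c + int a * int (maya_energy q) = int n}
      = (if int a dvd ?m then maya_count 0 (- triangular c + ?m div int a) else 0)"
    using assms
    unfolding rhs_set card_maya_charge_energy_mult[OF assms] dvd_add_times_triv_right_iff
    by (simp only: div_mult_self1 of_nat_eq_0_iff neq0_conv)
  show ?thesis
    unfolding lhs rhs by (simp add: algebra_simps)
qed

lemma abs_le_mult_self: "\<bar>c\<bar> \<le> c * (c :: int)"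
proof (cases "c = 0")
  case False
  then have "\<bar>c\<bar> * 1 \<le> \<bar>c\<bar> * \<bar>c\<bar>" by (intro mult_left_mono) auto
  then show ?thesis by (simp add: abs_mult_self_eq)
qed simp

lemma abs_le_theta_exponent:
  assumes "2 \<le> a"
  shows "\<bar>c\<bar> \<le> theta_exponent a c"
proof -
  have "2 * triangular c \<le> int a * triangular c"
    using assms triangular_nonneg[of c] by (intro mult_right_mono) auto
  then have "c * c \<le> theta_exponent a c"
    using two_times_triangular[of c] by (simp add: theta_exponent_def algebra_simps)
  with abs_le_mult_self[of c] show ?thesis by linarith
qed

lemma finite_theta_exponent_eq:
  assumes "2 \<le> a"
  shows "finite {c. theta_exponent a c = m}"
proof (rule finite_subset)
  show "{c. theta_exponent a c = m} \<subseteq> {- m..m}"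
  proof
    fix c assume "c \<in> {c. theta_exponent a c = m}"
    with abs_le_theta_exponent[OF assms, of c] show "c \<in> {- m..m}" by auto
  qed
qed simp

lemma card_maya_weight_eq_sum_charge:
  assumes "2 \<le> a"
  shows "card {p \<in> maya_diagrams. maya_weight a p = int n}
       = (\<Sum>c\<in>{- int n - 1..int n}. card {p \<in> maya_diagrams. maya_charge p = c \<and> maya_weight a p = int n})"
proof -
  let ?S = "{p \<in> maya_diagrams. maya_weight a p = int n}"
  have bound: "maya_energy p \<le> n \<and> maya_charge p \<in> {- int n - 1..int n}" if "p \<in> ?S" for p
  proof -
    have "2 * int (maya_energy p) \<le> int a * int (maya_energy p)"
      using assms by (intro mult_right_mono) auto
    moreover from that have "p \<in> maya_diagrams"
      "int a * int (maya_energy p) - maya_charge p = int n"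
      by (auto simp: maya_weight_def)
    ultimately have "int (maya_energy p) \<le> int n" "maya_charge p \<le> int n" "- int n - 1 \<le> maya_charge p"
      using maya_charge_bounds[of p] by linarith+
    then show ?thesis by simp
  qed
  then have "finite ?S"
    by (intro finite_subset[OF _ finite_maya_energy_le[of n]]) auto
  moreover have "maya_charge ` ?S \<subseteq> {- int n - 1..int n}"
    using bound by auto
  ultimately have "(\<Sum>c\<in>{- int n - 1..int n}. card {p. p \<in> ?S \<and> maya_charge p = c}) = card ?S"
    using sum.group[of ?S "{- int n - 1..int n}" maya_charge "\<lambda>_. 1 :: nat"]
    by (simp only: card_eq_sum finite_atLeastAtMost_int)
  moreover have "{p. p \<in> ?S \<and> maya_charge p = c}
      = {p \<in> maya_diagrams. maya_charge p = c \<and> maya_weight a p = int n}" for c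
    by auto
  ultimately show ?thesis by simp
qed

lemma theta_exponent_energy_bounds:
  assumes "2 \<le> a" "theta_exponent a c + int a * int (maya_energy q) = int n"
  shows "maya_energy q \<le> n" and "c \<in> {- int n - 1..int n}"
proof -
  have "\<bar>c\<bar> \<le> theta_exponent a c" using assms(1) by (rule abs_le_theta_exponent)
  moreover have "int (maya_energy q) \<le> int a * int (maya_energy q)"
    using assms(1) mult_right_mono[of 1 "int a" "int (maya_energy q)"] by simp
  ultimately show "maya_energy q \<le> n" "c \<in> {- int n - 1..int n}"
    using assms(2) by (auto simp: abs_le_iff)
qed

lemma card_maya_weight_eq_card_theta_pairs:
  assumes "2 \<le> a"
  shows "card {p \<in> maya_diagrams. maya_weight a p = int n}
       = card {(c, q). c \<in> UNIV \<and> q \<in> {q \<in> maya_diagrams. maya_charge q = 0} \<and>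
                  nat (theta_exponent a c) + a * maya_energy q = n}"
proof -
  define G where "G c = {q \<in> maya_diagrams. maya_charge q = 0 \<and>
                    theta_exponent a c + int a * int (maya_energy q) = int n}" for c
  have "finite (G c)" for c
    by (rule finite_subset[OF _ finite_maya_energy_le[of n]])
       (auto simp: G_def dest: theta_exponent_energy_bounds(1)[OF assms])
  then have "card {p \<in> maya_diagrams. maya_weight a p = int n}
      = card (SIGMA c:{- int n - 1..int n}. G c)"
    using assms card_maya_weight_charge[of a] by (simp add: card_maya_weight_eq_sum_charge G_def)
  also have "(SIGMA c:{- int n - 1..int n}. G c)
      = {(c, q). c \<in> UNIV \<and> q \<in> {q \<in> maya_diagrams. maya_charge q = 0} \<and>
                  nat (theta_exponent a c) + a * maya_energy q = n}"
  proof -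
    have "nat (theta_exponent a c) + a * maya_energy q = n
        \<longleftrightarrow> theta_exponent a c + int a * int (maya_energy q) = int n" for c q
    proof -
      have "0 \<le> theta_exponent a c"
        using abs_ge_zero[of c] abs_le_theta_exponent[OF assms, of c] by linarith
      then have "int (nat (theta_exponent a c) + a * maya_energy q)
          = theta_exponent a c + int a * int (maya_energy q)"
        by simp
      then show ?thesis by (metis of_nat_eq_iff)
    qed
    then show ?thesis
      using theta_exponent_energy_bounds(2)[OF assms] by (auto simp: G_def)
  qed
  finally show ?thesis .
qed

lemma card_charge0_energy_mult:
  assumes "0 < a"
  shows "card {q \<in> {q \<in> maya_diagrams. maya_charge q = 0}. a * maya_energy q = j}
       = (if a dvd j then maya_count 0 (int (j div a)) else 0)"
proof -
  have set_eq: "{q \<in> {q \<in> maya_diagrams. maya_charge q = 0}. a * maya_energy q = j}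
      = {q \<in> maya_diagrams. maya_charge q = 0 \<and> int a * int (maya_energy q) = int j}"
    unfolding of_nat_mult[symmetric] of_nat_eq_iff by blast
  show ?thesis
    unfolding set_eq card_maya_charge_energy_mult[OF assms] int_dvd_int_iff zdiv_int[symmetric] ..
qed

lemma card_maya_weight_eq_sum_theta:
  assumes "2 \<le> a"
  shows "card {p \<in> maya_diagrams. maya_weight a p = int n}
       = (\<Sum>i=0..n. card {c. theta_exponent a c = int i} *
            (if a dvd n - i then maya_count 0 (int ((n - i) div a)) else 0))"
proof -
  have "0 \<le> theta_exponent a c" for c
    using abs_ge_zero[of c] abs_le_theta_exponent[OF assms, of c] by linarith
  then have nat_theta: "{c \<in> UNIV. nat (theta_exponent a c) = i} = {c. theta_exponent a c = int i}" for i
    by auto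
  have "card {p \<in> maya_diagrams. maya_weight a p = int n}
      = (\<Sum>i=0..n. card {c \<in> UNIV. nat (theta_exponent a c) = i} *
           card {q \<in> {q \<in> maya_diagrams. maya_charge q = 0}. a * maya_energy q = n - i})"
    unfolding card_maya_weight_eq_card_theta_pairs[OF assms]
  proof (rule card_pairs_with_sum)
    show "finite {c \<in> UNIV. nat (theta_exponent a c) = i}" for i
      unfolding nat_theta using assms by (rule finite_theta_exponent_eq)
    show "finite {q \<in> {q \<in> maya_diagrams. maya_charge q = 0}. a * maya_energy q = i}" for i
      by (rule finite_subset[OF _ finite_maya_energy_le[of i]]) (use assms in auto)
  qed
  then show ?thesis
    using assms by (simp only: nat_theta card_charge0_energy_mult)
qed

definition theta_fps :: "nat \<Rightarrow> bit fps" where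
  "theta_fps a = Abs_fps (\<lambda>i. of_nat (card {c. theta_exponent a c = int i}))"

text \<open>Charge-0 Maya diagrams correspond to partitions, so \<open>charge0_fps\<close> is \<open>1 / \<Prod>k. (1 - q^k)\<close>
  modulo 2.\<close>
definition charge0_fps :: "bit fps" where
  "charge0_fps = Abs_fps (\<lambda>m. of_nat (maya_count 0 (int m)))"

theorem jacobi_triple_product_bit:
  assumes "2 \<le> a"
  shows "distinct_parts_fps (minus_one_residues a) * distinct_parts_fps (one_residues a)
       = theta_fps a * fps_stretch a charge0_fps"
proof (rule fps_ext)
  fix n
  have a0: "0 < a" using assms by simp
  have "(distinct_parts_fps (minus_one_residues a) * distinct_parts_fps (one_residues a)) $ n
      = of_nat (card {p \<in> maya_diagrams. maya_weight a p = int n})"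
    unfolding distinct_parts_fps_mult_nth card_maya_weight_eq_distinct_part_pairs[OF a0] ..
  also have "\<dots> = (\<Sum>i=0..n. theta_fps a $ i * fps_stretch a charge0_fps $ (n - i))"
    unfolding card_maya_weight_eq_sum_theta[OF assms] of_nat_sum of_nat_mult
    unfolding theta_fps_def fps_stretch_def charge0_fps_def fps_nth_Abs_fps
    by (simp only: if_distrib[of "of_nat :: nat \<Rightarrow> bit"] of_nat_0)
  also have "\<dots> = (theta_fps a * fps_stretch a charge0_fps) $ n"
    by (simp only: fps_mult_nth)
  finally show "(distinct_parts_fps (minus_one_residues a) * distinct_parts_fps (one_residues a)) $ n
      = (theta_fps a * fps_stretch a charge0_fps) $ n" .
qed

section \<open>The cases \<open>a = 2\<close> and \<open>a = 4\<close>\<close>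

lemma theta_fps_2: "theta_fps 2 = 1"
proof (rule fps_ext)
  fix i
  define S where "S = {c :: int. c * c = int i}"
  have S: "{c. theta_exponent 2 c = int i} = S"
    using two_times_triangular by (auto simp: S_def theta_exponent_def algebra_simps)
  have "finite S"
  proof (rule finite_subset)
    show "S \<subseteq> {- int i..int i}"
    proof
      fix c assume "c \<in> S"
      then have "\<bar>c\<bar> \<le> int i" using abs_le_mult_self[of c] by (simp add: S_def)
      then show "c \<in> {- int i..int i}" by auto
    qed
  qed simp
  then have "(of_nat (card S) :: bit) = of_nat (card {c \<in> S. - c = c})"
    by (rule card_bit_involution) (auto simp: S_def)
  also have "{c \<in> S. - c = c} = (if i = 0 then {0} else {})"
    by (auto simp: S_def)
  finally show "theta_fps 2 $ i = 1 $ i"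
    unfolding theta_fps_def fps_nth_Abs_fps S by (cases "i = 0") simp_all
qed

lemma minus_one_residues_2: "minus_one_residues 2 = {x. odd x}"
proof -
  have "x \<in> minus_one_residues 2" if "odd x" for x
  proof -
    from that have "x = 2 * ((x + 1) div 2) - 1" "0 < (x + 1) div 2" by presburger+
    then show ?thesis unfolding minus_one_residues_def by blast
  qed
  then show ?thesis by (auto simp: minus_one_residues_def)
qed

lemma one_residues_2: "one_residues 2 = {x. odd x}"
proof -
  have "x \<in> one_residues 2" if "odd x" for x
  proof -
    from that have "x = 2 * (x div 2) + 1" by presburger
    then show ?thesis unfolding one_residues_def by blast
  qed
  then show ?thesis by (auto simp: one_residues_def)
qed

lemma minus_one_residues_4_Un_one_residues_4:
  "minus_one_residues 4 \<union> one_residues 4 = {x. odd x}"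
proof -
  have "x \<in> minus_one_residues 4 \<union> one_residues 4" if "odd x" for x
  proof (cases "x mod 4 = 3")
    case True
    then have "x = 4 * ((x + 1) div 4) - 1" "0 < (x + 1) div 4" by presburger+
    then show ?thesis unfolding minus_one_residues_def by blast
  next
    case False
    with that have "x = 4 * (x div 4) + 1" by presburger
    then show ?thesis unfolding one_residues_def by blast
  qed
  moreover have "odd x" if "x \<in> minus_one_residues 4 \<union> one_residues 4" for x
    using that by (auto simp: minus_one_residues_def one_residues_def)
  ultimately show ?thesis by blast
qed

lemma minus_one_residues_4_Int_one_residues_4:
  "minus_one_residues 4 \<inter> one_residues 4 = {}"
proof -
  have "4 * u - 1 \<noteq> 4 * v + (1::nat)" if "0 < u" for u v
    using that by presburger
  then show ?thesis by (auto simp: minus_one_residues_def one_residues_def)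
qed

text \<open>For \<open>a = 2\<close> the theta series is trivial and both residue classes are the odd numbers.\<close>
lemma distinct_parts_fps_odd: "distinct_parts_fps {x. odd x} = charge0_fps"
proof (rule fps_stretch_inject)
  have "fps_stretch 2 (distinct_parts_fps {x. odd x}) = distinct_parts_fps {x. odd x} ^ 2"
    by (rule bit_fps_power2[symmetric])
  also have "\<dots> = theta_fps 2 * fps_stretch 2 charge0_fps"
    using jacobi_triple_product_bit[of 2]
    by (simp add: power2_eq_square minus_one_residues_2 one_residues_2)
  also have "\<dots> = fps_stretch 2 charge0_fps"
    by (simp add: theta_fps_2)
  finally show "fps_stretch 2 (distinct_parts_fps {x. odd x}) = fps_stretch 2 charge0_fps" .
qed simp

lemma distinct_parts_fps_odd_eq_theta:
  "distinct_parts_fps {x. odd x} = theta_fps 4 * distinct_parts_fps {x. odd x} ^ 4"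
proof -
  have "distinct_parts_fps {x. odd x}
      = distinct_parts_fps (minus_one_residues 4) * distinct_parts_fps (one_residues 4)"
    by (simp flip: minus_one_residues_4_Un_one_residues_4
        add: distinct_parts_fps_union minus_one_residues_4_Int_one_residues_4)
  also have "\<dots> = theta_fps 4 * fps_stretch 4 charge0_fps"
    by (rule jacobi_triple_product_bit) simp
  finally show ?thesis
    by (simp add: bit_fps_power4 distinct_parts_fps_odd)
qed

section \<open>Partitions with no part divisible by 4\<close>

definition partitions :: "nat set \<Rightarrow> nat \<Rightarrow> nat multiset set" where
  "partitions K n = {M. set_mset M \<subseteq> K \<and> sum_mset M = n}"

definition partitions_fps :: "nat set \<Rightarrow> bit fps" where
  "partitions_fps K = Abs_fps (\<lambda>n. of_nat (card (partitions K n)))"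

lemma member_le_sum_mset: "x \<in># M \<Longrightarrow> x \<le> sum_mset (M :: nat multiset)"
proof -
  assume "x \<in># M"
  then have "sum_mset M = x + sum_mset (M - {#x#})"
    by (metis insert_DiffM sum_mset.add_mset)
  then show ?thesis by simp
qed

lemma size_le_sum_mset: "0 \<notin># M \<Longrightarrow> size M \<le> sum_mset (M :: nat multiset)"
proof (induction M)
  case (add x M)
  then have "0 < x" by (metis gr0I union_single_eq_member)
  with add show ?case by simp
qed simp

lemma finite_partitions:
  assumes "0 \<notin> K"
  shows "finite (partitions K n)"
proof (rule finite_subset)
  show "partitions K n \<subseteq> (\<Union>k\<le>n. multisets_of_size {..n} k)"
  proof
    fix M assume "M \<in> partitions K n"
    then have "set_mset M \<subseteq> K" "sum_mset M = n" by (auto simp: partitions_def)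
    with assms have "size M \<le> n"
      using size_le_sum_mset[of M] by auto
    moreover have "set_mset M \<subseteq> {..n}"
      using member_le_sum_mset[of _ M] \<open>sum_mset M = n\<close> by auto
    ultimately show "M \<in> (\<Union>k\<le>n. multisets_of_size {..n} k)"
      by (auto simp: multisets_of_size_def)
  qed
qed auto

lemma b_eq_card_partitions: "b l n = card (partitions {x. 0 < x \<and> \<not> l dvd x} n)"
  unfolding b_def partitions_def by (rule arg_cong[where f = card]) auto

text \<open>Moving the largest part between a partition and a set of distinct parts is an
  involution without fixed points on nonempty pairs.\<close>
definition move_largest_part :: "nat multiset \<times> nat set \<Rightarrow> nat multiset \<times> nat set" where
  "move_largest_part p = (let x = Max (set_mset (fst p) \<union> snd p) in
     if x \<in> snd p then (add_mset x (fst p), snd p - {x}) else (fst p - {#x#}, insert x (snd p)))"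

lemma move_largest_part_cases:
  assumes "finite S" "set_mset M \<union> S \<noteq> {}"
  obtains x where "x \<in> S" "move_largest_part (M, S) = (add_mset x M, S - {x})"
      "move_largest_part (add_mset x M, S - {x}) = (M, S)"
  | x where "x \<notin> S" "x \<in># M" "move_largest_part (M, S) = (M - {#x#}, insert x S)"
      "move_largest_part (M - {#x#}, insert x S) = (M, S)"
proof -
  define x where "x = Max (set_mset M \<union> S)"
  have "x \<in> set_mset M \<union> S"
    unfolding x_def using assms by (intro Max_in) auto
  show thesis
  proof (cases "x \<in> S")
    case True
    have parts: "set_mset (add_mset x M) \<union> (S - {x}) = set_mset M \<union> S"
      using True by auto
    have inverse: "move_largest_part (add_mset x M, S - {x}) = (M, S)"
      unfolding move_largest_part_def Let_def fst_conv snd_conv parts x_def[symmetric]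
      using True by (simp add: insert_absorb)
    have "move_largest_part (M, S) = (add_mset x M, S - {x})"
      using True by (simp add: move_largest_part_def Let_def x_def)
    with True inverse show thesis by (intro that(1))
  next
    case False
    with \<open>x \<in> set_mset M \<union> S\<close> have "x \<in># M" by simp
    then have parts: "set_mset (M - {#x#}) \<union> insert x S = set_mset M \<union> S"
      by (metis Un_insert_left Un_insert_right insert_DiffM set_mset_add_mset_insert)
    have inverse: "move_largest_part (M - {#x#}, insert x S) = (M, S)"
      unfolding move_largest_part_def Let_def fst_conv snd_conv parts x_def[symmetric]
      using False \<open>x \<in># M\<close> by simp
    have "move_largest_part (M, S) = (M - {#x#}, insert x S)"
      using False by (simp add: move_largest_part_def Let_def x_def)
    with False \<open>x \<in># M\<close> inverse show thesis by (intro that(2))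
  qed
qed

definition partition_pairs :: "nat set \<Rightarrow> nat \<Rightarrow> (nat multiset \<times> nat set) set" where
  "partition_pairs K n = {(M, S). set_mset M \<subseteq> K \<and> S \<subseteq> K \<and> finite S \<and> sum_mset M + \<Sum>S = n}"

lemma partitions_fps_mult_distinct_parts_fps_nth:
  assumes "0 \<notin> K"
  shows "(partitions_fps K * distinct_parts_fps K) $ n = of_nat (card (partition_pairs K n))"
proof -
  have pairs: "partition_pairs K n = {(M, S). M \<in> {M. set_mset M \<subseteq> K} \<and> S \<in> {S. S \<subseteq> K \<and> finite S}
      \<and> sum_mset M + \<Sum>S = n}"
    by (auto simp: partition_pairs_def)
  have partitions: "{M \<in> {M. set_mset M \<subseteq> K}. sum_mset M = i} = partitions K i" for i
    by (auto simp: partitions_def)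
  have distinct: "{S \<in> {S. S \<subseteq> K \<and> finite S}. \<Sum>S = i} = distinct_parts K i" for i
    by (auto simp: distinct_parts_def)
  have "card (partition_pairs K n)
      = (\<Sum>i=0..n. card (partitions K i) * card (distinct_parts K (n - i)))"
    unfolding pairs
    by (subst card_pairs_with_sum[where f = sum_mset and g = Sum])
       (simp_all only: partitions distinct finite_partitions[OF assms] finite_distinct_parts)
  then show ?thesis
    by (simp add: partitions_fps_def distinct_parts_fps_def fps_mult_nth)
qed

lemma finite_partition_pairs: "0 \<notin> K \<Longrightarrow> finite (partition_pairs K n)"
proof (rule finite_subset)
  show "partition_pairs K n \<subseteq> (\<Union>i\<le>n. partitions K i) \<times> (\<Union>i\<le>n. distinct_parts K i)"
    by (force simp: partition_pairs_def partitions_def distinct_parts_def)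
qed (simp add: finite_partitions)

lemma partition_pairs_0:
  assumes "0 \<notin> K"
  shows "partition_pairs K 0 = {({#}, {})}"
proof (intro equalityI subsetI)
  fix p assume "p \<in> partition_pairs K 0"
  then obtain M S where p: "p = (M, S)" "set_mset M \<subseteq> K" "S \<subseteq> K" "finite S" "sum_mset M + \<Sum>S = 0"
    by (auto simp: partition_pairs_def)
  with assms have "0 \<notin># M" "0 \<notin> S" by auto
  then have "size M \<le> 0" "card S \<le> 0"
    using size_le_sum_mset[of M] card_le_sum_nat[of S] p(5) by linarith+
  with p(1,4) show "p \<in> {({#}, {})}" by simp
qed (simp add: partition_pairs_def)

lemma card_partition_pairs_even:
  assumes "0 \<notin> K" "0 < n"
  shows "(of_nat (card (partition_pairs K n)) :: bit) = 0"
proof -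
  let ?P = "partition_pairs K n"
  have move: "move_largest_part p \<in> ?P \<and> move_largest_part (move_largest_part p) = p \<and>
      move_largest_part p \<noteq> p" if "p \<in> ?P" for p
  proof -
    from that obtain M S where p: "p = (M, S)" "set_mset M \<subseteq> K" "S \<subseteq> K" "finite S"
        "sum_mset M + \<Sum>S = n"
      by (auto simp: partition_pairs_def)
    with assms(2) have "set_mset M \<union> S \<noteq> {}" by auto
    with p(4) show ?thesis
    proof (cases rule: move_largest_part_cases)
      case (1 x)
      with p show ?thesis by (auto simp: partition_pairs_def sum.remove)
    next
      case (2 x)
      then have "sum_mset M = x + sum_mset (M - {#x#})" by (metis insert_DiffM sum_mset.add_mset)
      with 2 p show ?thesis by (auto simp: partition_pairs_def dest: in_diffD)
    qed
  qed
  then have "(of_nat (card ?P) :: bit) = of_nat (card {p \<in> ?P. move_largest_part p = p})"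
    using finite_partition_pairs[OF assms(1)] by (intro card_bit_involution) auto
  also have "{p \<in> ?P. move_largest_part p = p} = {}"
    using move by auto
  finally show ?thesis by simp
qed

lemma partitions_fps_mult_distinct_parts_fps:
  assumes "0 \<notin> K"
  shows "partitions_fps K * distinct_parts_fps K = 1"
proof (rule fps_ext)
  fix n
  show "(partitions_fps K * distinct_parts_fps K) $ n = 1 $ n"
    unfolding partitions_fps_mult_distinct_parts_fps_nth[OF assms]
    using card_partition_pairs_even[OF assms, of n]
    by (cases "n = 0") (simp_all add: partition_pairs_0[OF assms])
qed

lemma greaterThan_0_eq_not_dvd_Un:
  fixes k :: nat
  assumes "0 < k"
  shows "{0<..} = {x. 0 < x \<and> \<not> k dvd x} \<union> (*) k ` {0<..}"
proof -
  have "x \<in> (*) k ` {0<..}" if "0 < x" "k dvd x" for x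
  proof -
    from that obtain y where "x = k * y" by blast
    with that show ?thesis by auto
  qed
  with assms show ?thesis by auto
qed

lemma distinct_parts_fps_positive_split:
  assumes "0 < k"
  shows "distinct_parts_fps {0<..}
       = distinct_parts_fps {x. 0 < x \<and> \<not> k dvd x} * fps_stretch k (distinct_parts_fps {0<..})"
proof -
  have "{x. 0 < x \<and> \<not> k dvd x} \<inter> (*) k ` {0 :: nat<..} = {}" by auto
  then have "distinct_parts_fps {0<..}
      = distinct_parts_fps {x. 0 < x \<and> \<not> k dvd x} * distinct_parts_fps ((*) k ` {0<..})"
    by (subst greaterThan_0_eq_not_dvd_Un[OF assms]) (rule distinct_parts_fps_union)
  with assms show ?thesis
    by (simp add: distinct_parts_fps_image_mult)
qed

lemma distinct_parts_fps_odd_mult_positive: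
  "distinct_parts_fps {x. odd x} * distinct_parts_fps {0<..} = 1"
proof -
  let ?D = "distinct_parts_fps {0<..}"
  have "?D $ 0 = 1" by (rule distinct_parts_fps_nth_0) simp
  then have "?D \<noteq> 0" by auto
  have "{x. 0 < x \<and> \<not> 2 dvd x} = {x :: nat. odd x}" by (auto intro: odd_pos)
  then have "?D = distinct_parts_fps {x. odd x} * ?D ^ 2"
    using distinct_parts_fps_positive_split[of 2] by (simp add: bit_fps_power2)
  then have "?D * (distinct_parts_fps {x. odd x} * ?D) = ?D * 1"
    by (simp add: power2_eq_square algebra_simps)
  with \<open>?D \<noteq> 0\<close> show ?thesis
    by (metis mult_left_cancel)
qed

lemma theta_fps_4_eq_cube: "theta_fps 4 = distinct_parts_fps {0<..} ^ 3"
proof -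
  let ?D = "distinct_parts_fps {0<..}" and ?D_odd = "distinct_parts_fps {x. odd x}"
  have "?D_odd * ?D ^ 4 = theta_fps 4 * (?D_odd * ?D) ^ 4"
    by (subst (1) distinct_parts_fps_odd_eq_theta) (simp add: power_mult_distrib algebra_simps)
  moreover have "?D_odd * ?D ^ 4 = (?D_odd * ?D) * ?D ^ 3"
    by (simp add: eval_nat_numeral algebra_simps)
  ultimately show ?thesis
    by (simp add: distinct_parts_fps_odd_mult_positive)
qed

theorem partitions_fps_not_dvd_4: "partitions_fps {x. 0 < x \<and> \<not> 4 dvd x} = theta_fps 4"
proof -
  let ?D = "distinct_parts_fps {0<..}" and ?P = "partitions_fps {x. 0 < x \<and> \<not> 4 dvd x}"
  have "?D $ 0 = 1" by (rule distinct_parts_fps_nth_0) simp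
  then have "?D \<noteq> 0" by auto
  have "?P * distinct_parts_fps {x. 0 < x \<and> \<not> 4 dvd x} = 1"
    by (rule partitions_fps_mult_distinct_parts_fps) simp
  then have "?P * ?D = ?D ^ 4"
    by (subst distinct_parts_fps_positive_split[of 4])
       (simp_all only: bit_fps_power4 mult.assoc[symmetric] mult_1 zero_less_numeral)
  also have "\<dots> = theta_fps 4 * ?D"
    using power_Suc2[of ?D 3] by (simp add: theta_fps_4_eq_cube)
  finally show ?thesis
    using \<open>?D \<noteq> 0\<close> by (metis mult_right_cancel)
qed

section \<open>The coefficients of \<open>\<psi>\<close>\<close>

definition zigzag :: "nat \<Rightarrow> int" where
  "zigzag k = (if even k then int k div 2 else - ((int k + 1) div 2))"

definition unzigzag :: "int \<Rightarrow> nat" where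
  "unzigzag c = (if 0 \<le> c then nat (2 * c) else nat (- 2 * c - 1))"

lemma unzigzag_zigzag [simp]: "unzigzag (zigzag k) = k"
  unfolding zigzag_def unzigzag_def by (cases "even k") (auto elim!: evenE oddE)

lemma zigzag_unzigzag [simp]: "zigzag (unzigzag c) = c"
  unfolding zigzag_def unzigzag_def by (cases "0 \<le> c") (auto simp: even_nat_iff nat_mult_distrib)

lemma triangular_zigzag: "int (k * (k + 1) div 2) = theta_exponent 4 (zigzag k)"
proof (cases "even k")
  case True
  then obtain j where k: "k = 2 * j" ..
  have "2 * triangular (int j) = int j * (int j + 1)" by (rule two_times_triangular)
  then show ?thesis by (simp add: k zigzag_def theta_exponent_def algebra_simps)
next
  case False
  then obtain j where k: "k = 2 * j + 1" by (rule oddE)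
  have "k * (k + 1) div 2 = (2 * j + 1) * (j + 1)" by (simp add: k algebra_simps)
  moreover have "2 * triangular (- (int j + 1)) = int j * (int j + 1)"
    using two_times_triangular[of "- (int j + 1)"] by (simp add: algebra_simps)
  ultimately show ?thesis by (simp add: k zigzag_def theta_exponent_def algebra_simps)
qed

lemma theta_fps_4_nth: "theta_fps 4 $ n = of_nat (psi_coeff n)"
proof -
  have "bij_betw zigzag {k. k * (k + 1) div 2 = n} {c. theta_exponent 4 c = int n}"
  proof (rule bij_betw_byWitness[where f' = unzigzag])
    show "zigzag ` {k. k * (k + 1) div 2 = n} \<subseteq> {c. theta_exponent 4 c = int n}"
      using triangular_zigzag by (auto simp del: of_nat_numeral)
    show "unzigzag ` {c. theta_exponent 4 c = int n} \<subseteq> {k. k * (k + 1) div 2 = n}"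
    proof
      fix k assume "k \<in> unzigzag ` {c. theta_exponent 4 c = int n}"
      then obtain c where "theta_exponent 4 c = int n" "k = unzigzag c" by blast
      then have "int (k * (k + 1) div 2) = int n" using triangular_zigzag[of k] by simp
      then show "k \<in> {k. k * (k + 1) div 2 = n}" by simp
    qed
  qed auto
  then show ?thesis
    unfolding theta_fps_def psi_coeff_def by (simp add: bij_betw_same_card)
qed

lemma b4_cong_psi_coeff: "[b 4 n = psi_coeff n] (mod 2)"
proof -
  have "(of_nat (b 4 n) :: bit) = partitions_fps {x. 0 < x \<and> \<not> 4 dvd x} $ n"
    by (simp add: b_eq_card_partitions partitions_fps_def)
  also have "\<dots> = of_nat (psi_coeff n)"
    by (simp add: partitions_fps_not_dvd_4 theta_fps_4_nth)
  finally show ?thesis by (simp add: of_nat_bit_eq_iff_cong)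
qed

lemma strict_mono_triangular_nat: "strict_mono (\<lambda>k :: nat. k * (k + 1) div 2)"
unfolding strict_mono_Suc_iff
proof
  fix k :: nat
  have "Suc k * (Suc k + 1) = k * (k + 1) + 2 * (k + 1)" by (simp add: algebra_simps)
  then show "k * (k + 1) div 2 < Suc k * (Suc k + 1) div 2" by simp
qed

lemma odd_square_triangular: "(2 * k + 1) ^ 2 = 8 * (k * (k + 1) div 2) + (1 :: nat)"
proof -
  have "2 * (k * (k + 1) div 2) = k * (k + 1)" by simp
  moreover have "(2 * k + 1) ^ 2 = 4 * (k * (k + 1)) + 1"
    by (simp add: power2_eq_square algebra_simps)
  ultimately show ?thesis by linarith
qed

lemma triangular_nat_iff_square: "(\<exists>k. k * (k + 1) div 2 = n) \<longleftrightarrow> is_square (8 * n + (1 :: nat))"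
proof
  assume "\<exists>k. k * (k + 1) div 2 = n"
  then obtain k where "k * (k + 1) div 2 = n" ..
  then have "8 * n + 1 = (2 * k + 1) ^ 2" using odd_square_triangular[of k] by simp
  then show "is_square (8 * n + 1)" ..
next
  assume "is_square (8 * n + 1)"
  then obtain s where s: "8 * n + 1 = s ^ 2" by (auto elim: is_nth_powerE)
  moreover have "odd (8 * n + 1)" by simp
  ultimately have "odd s" by simp
  then obtain k where "s = 2 * k + 1" by (rule oddE)
  with s have "8 * n + 1 = 8 * (k * (k + 1) div 2) + 1"
    by (simp only: odd_square_triangular)
  then have "k * (k + 1) div 2 = n" by simp
  then show "\<exists>k. k * (k + 1) div 2 = n" ..
qed

lemma psi_coeff_eq: "psi_coeff n = (if is_square (8 * n + 1) then 1 else 0)"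
proof (cases "is_square (8 * n + 1)")
  case True
  then obtain k where k: "k * (k + 1) div 2 = n" using triangular_nat_iff_square by blast
  then have "{k. k * (k + 1) div 2 = n} = {k}"
    using strict_mono_eq[OF strict_mono_triangular_nat] by auto
  with True show ?thesis by (simp add: psi_coeff_def)
next
  case False
  then have "{k. k * (k + 1) div 2 = n} = {}" using triangular_nat_iff_square by blast
  with False show ?thesis by (simp add: psi_coeff_def)
qed

lemma b4_cong_0_of_not_square: "\<not> is_square (8 * m + 1) \<Longrightarrow> [b 4 m = 0] (mod 2)"
  using b4_cong_psi_coeff[of m] by (simp add: psi_coeff_eq)

lemma odd_square_eq:
  assumes "odd r"
  shows "r ^ 2 = 8 * ((r ^ 2 - 1) div 8) + (1 :: nat)"
proof -
  from assms obtain k where "r = 2 * k + 1" by (rule oddE)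
  then have "r ^ 2 = 8 * (k * (k + 1) div 2) + 1" by (simp only: odd_square_triangular)
  then show ?thesis by simp
qed

lemma is_square_mult_square_iff: "0 < r \<Longrightarrow> is_square (r ^ 2 * x) \<longleftrightarrow> is_square (x :: nat)"
  by (rule is_nth_power_mult_cancel_left) auto

lemma not_is_square_prime_mult:
  assumes "prime p" "\<not> p dvd x"
  shows "\<not> is_square (p * x :: nat)"
proof
  assume "is_square (p * x)"
  then obtain t where t: "p * x = t ^ 2" by (auto elim: is_nth_powerE)
  then have "p dvd t" using assms(1) by (metis dvd_triv_left prime_dvd_power)
  then obtain u where "t = p * u" ..
  with t assms(1) have "x = p * u ^ 2" by (simp add: power2_eq_square prime_gt_0_nat)
  with assms(2) show False by simp
qed

lemma psi_coeff_odd_square_dilation: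
  assumes "odd r"
  shows "psi_coeff (r ^ 2 * n + (r ^ 2 - 1) div 8) = psi_coeff n"
proof -
  have "8 * (r ^ 2 * n + (r ^ 2 - 1) div 8) + 1 = r ^ 2 * (8 * n + 1)"
    using odd_square_eq[OF assms] by (simp add: algebra_simps)
  moreover have "0 < r" using assms by (rule odd_pos)
  ultimately show ?thesis
    unfolding psi_coeff_eq by (simp only: is_square_mult_square_iff)
qed

lemma b4_cong_0_prime_square:
  assumes "prime p" "odd p" "odd r" "1 \<le> i" "i < p"
  shows "[b 4 (r ^ 2 * p ^ 2 * n + ((8 * i + p) * r ^ 2 * p - 1) div 8) = 0] (mod 2)"
proof (rule b4_cong_0_of_not_square)
  define w where "w = ((r * p) ^ 2 - 1) div 8"
  have "odd (r * p)" using assms by simp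
  then have w: "(r * p) ^ 2 = 8 * w + 1" unfolding w_def by (rule odd_square_eq)
  have "(8 * i + p) * r ^ 2 * p = 8 * (i * r ^ 2 * p) + (r * p) ^ 2"
    by (simp add: algebra_simps power2_eq_square)
  with w have div: "((8 * i + p) * r ^ 2 * p - 1) div 8 = i * r ^ 2 * p + w" by simp
  have "8 * (r ^ 2 * p ^ 2 * n + ((8 * i + p) * r ^ 2 * p - 1) div 8) + 1
      = 8 * (r ^ 2 * p ^ 2 * n) + 8 * (i * r ^ 2 * p) + (r * p) ^ 2"
    unfolding div w by simp
  also have "\<dots> = r ^ 2 * (p * (p * (8 * n + 1) + 8 * i))"
    by (simp add: algebra_simps power2_eq_square)
  finally have eq: "8 * (r ^ 2 * p ^ 2 * n + ((8 * i + p) * r ^ 2 * p - 1) div 8) + 1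
      = r ^ 2 * (p * (p * (8 * n + 1) + 8 * i))" .
  have "\<not> p dvd p * (8 * n + 1) + 8 * i"
  proof
    assume "p dvd p * (8 * n + 1) + 8 * i"
    then have "p dvd 8 * i" by (simp add: dvd_add_right_iff)
    moreover have "\<not> p dvd 8"
    proof
      assume "p dvd 8"
      then have "p dvd 2 ^ 3" by simp
      then have "p dvd 2" using assms(1) prime_dvd_power by blast
      then have "p \<le> 2" by (simp add: dvd_imp_le)
      with prime_ge_2_nat[OF assms(1)] assms(2) show False by simp
    qed
    moreover have "\<not> p dvd i" using assms(4,5) by (auto dest: dvd_imp_le)
    ultimately show False using assms(1) by (simp add: prime_dvd_mult_iff)
  qed
  moreover have "0 < r" using assms(3) by (rule odd_pos)
  ultimately show "\<not> is_square (8 * (r ^ 2 * p ^ 2 * n + ((8 * i + p) * r ^ 2 * p - 1) div 8) + 1)"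
    unfolding eq using not_is_square_prime_mult[OF assms(1)] by (simp only: is_square_mult_square_iff)
qed

lemma b4_cong_0_nonresidue:
  assumes "odd r" "Legendre (int (8 * j + 1)) (int p) = -1"
  shows "[b 4 (r ^ 2 * p * n + ((8 * j + 1) * r ^ 2 - 1) div 8) = 0] (mod 2)"
proof (rule b4_cong_0_of_not_square)
  define w where "w = (r ^ 2 - 1) div 8"
  have w: "r ^ 2 = 8 * w + 1" unfolding w_def using assms(1) by (rule odd_square_eq)
  have "(8 * j + 1) * r ^ 2 = 8 * (j * r ^ 2) + r ^ 2" by (simp add: algebra_simps)
  with w have div: "((8 * j + 1) * r ^ 2 - 1) div 8 = j * r ^ 2 + w" by simp
  have "8 * (r ^ 2 * p * n + ((8 * j + 1) * r ^ 2 - 1) div 8) + 1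
      = 8 * (r ^ 2 * p * n) + 8 * (j * r ^ 2) + r ^ 2"
    unfolding div w by (simp add: algebra_simps)
  also have "\<dots> = r ^ 2 * (8 * p * n + 8 * j + 1)"
    by (simp add: algebra_simps)
  finally have eq: "8 * (r ^ 2 * p * n + ((8 * j + 1) * r ^ 2 - 1) div 8) + 1
      = r ^ 2 * (8 * p * n + 8 * j + 1)" .
  have "\<not> is_square (8 * p * n + 8 * j + 1)"
  proof
    assume "is_square (8 * p * n + 8 * j + 1)"
    then obtain t where t: "8 * p * n + 8 * j + 1 = t ^ 2" by (auto elim: is_nth_powerE)
    then have "int (t ^ 2) = int (8 * p * n + 8 * j + 1)" by metis
    then have "int t ^ 2 = int (8 * j + 1) + int p * int (8 * n)"
      by (simp add: algebra_simps)
    then have "[int t ^ 2 = int (8 * j + 1)] (mod int p)"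
      by (simp add: cong_def)
    then have "QuadRes (int p) (int (8 * j + 1))" unfolding QuadRes_def by blast
    with assms(2) show False by (simp add: Legendre_def split: if_splits)
  qed
  moreover have "0 < r" using assms(1) by (rule odd_pos)
  ultimately show "\<not> is_square (8 * (r ^ 2 * p * n + ((8 * j + 1) * r ^ 2 - 1) div 8) + 1)"
    unfolding eq by (simp only: is_square_mult_square_iff not_False_eq_True)
qed

lemma prod_list_map_power2: "(\<Prod>x\<leftarrow>xs. x ^ 2) = prod_list xs ^ 2" for xs :: "nat list"
  by (induction xs) (simp_all add: power_mult_distrib)

lemma odd_prod_list: "(\<And>x. x \<in> set xs \<Longrightarrow> odd x) \<Longrightarrow> odd (prod_list (xs :: nat list))"
  by (induction xs) simp_all

lemma prod_list_butlast_last: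
  assumes "xs \<noteq> []"
  shows "prod_list xs = prod_list (butlast xs) * last (xs :: nat list)"
proof -
  from assms have "prod_list xs = prod_list (butlast xs @ [last xs])" by simp
  then show ?thesis by simp
qed

lemma b4_cong_psi_coeff_odd_prime_squares:
  assumes "\<forall>p\<in>set ps. prime p \<and> odd p"
  shows "[b 4 ((\<Prod>p\<leftarrow>ps. p^2) * n + ((\<Prod>p\<leftarrow>ps. p^2) - 1) div 8) = psi_coeff n] (mod 2)"
proof -
  have "odd (prod_list ps)" using assms by (intro odd_prod_list) auto
  then have "psi_coeff (prod_list ps ^ 2 * n + (prod_list ps ^ 2 - 1) div 8) = psi_coeff n"
    by (rule psi_coeff_odd_square_dilation)
  with b4_cong_psi_coeff show ?thesis
    unfolding prod_list_map_power2 by metis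
qed

lemma b4_cong_0_odd_prime_squares:
  assumes "ps \<noteq> []" "\<forall>p\<in>set ps. prime p \<and> odd p" "1 \<le> i" "i \<le> last ps - 1"
  shows "[b 4 ((\<Prod>p\<leftarrow>ps. p^2) * n
            + ((8 * i + last ps) * (\<Prod>p\<leftarrow>butlast ps. p^2) * last ps - 1) div 8) = 0] (mod 2)"
proof -
  from assms(1,2) have p: "prime (last ps)" "odd (last ps)" and "odd (prod_list (butlast ps))"
    by (auto intro!: odd_prod_list dest: in_set_butlastD)
  moreover have "i < last ps" using assms(3,4) prime_gt_0_nat[OF p(1)] by linarith
  ultimately show ?thesis
    using b4_cong_0_prime_square[OF p, of "prod_list (butlast ps)" i n] assms(3)
    unfolding prod_list_map_power2 prod_list_butlast_last[OF assms(1)] by (simp add: power_mult_distrib)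
qed

lemma b4_cong_0_odd_prime_squares_nonresidue:
  assumes "ps \<noteq> []" "\<forall>p\<in>set ps. prime p \<and> odd p" "Legendre (int (8 * j + 1)) (int (last ps)) = -1"
  shows "[b 4 ((\<Prod>p\<leftarrow>butlast ps. p^2) * last ps * n
            + ((8 * j + 1) * (\<Prod>p\<leftarrow>butlast ps. p^2) - 1) div 8) = 0] (mod 2)"
proof -
  from assms(1,2) have "odd (prod_list (butlast ps))"
    by (auto intro!: odd_prod_list dest: in_set_butlastD)
  from b4_cong_0_nonresidue[OF this assms(3)] show ?thesis
    unfolding prod_list_map_power2 .
qed

theorem theorem3p12:
  shows
  "(\<forall>ps :: nat list. (\<forall>p\<in>set ps. prime p \<and> odd p) \<longrightarrow>
      (\<forall>n. let P = (\<Prod>p\<leftarrow>ps. p^2) in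
         [b 4 (P * n + (P - 1) div 8) = psi_coeff n] (mod 2)))
   \<and>
   (\<forall>ps :: nat list. ps \<noteq> [] \<longrightarrow> (\<forall>p\<in>set ps. prime p \<and> odd p) \<longrightarrow>
      (\<forall>n i. let P = (\<Prod>p\<leftarrow>ps. p^2); Q = (\<Prod>p\<leftarrow>butlast ps. p^2); pr = last ps in
         1 \<le> i \<longrightarrow> i \<le> pr - 1 \<longrightarrow>
         [b 4 (P * n + ((8 * i + pr) * Q * pr - 1) div 8) = 0] (mod 2)))
   \<and>
   (\<forall>ps :: nat list. ps \<noteq> [] \<longrightarrow> (\<forall>p\<in>set ps. prime p \<and> odd p) \<longrightarrow>
      (\<forall>n j. let Q = (\<Prod>p\<leftarrow>butlast ps. p^2); pr = last ps in
         j \<le> pr - 1 \<longrightarrow> Legendre (int (8 * j + 1)) (int pr) = -1 \<longrightarrow>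
         [b 4 (Q * pr * n + ((8 * j + 1) * Q - 1) div 8) = 0] (mod 2)))"
  unfolding Let_def
  by (intro conjI allI impI;
      rule b4_cong_psi_coeff_odd_prime_squares b4_cong_0_odd_prime_squares
        b4_cong_0_odd_prime_squares_nonresidue; assumption)

end
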